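(* Let $X$ be a complex Banach space and $T:X\to X$ a bounded linear operator. Then: (i) for every $\lambda\in\mathbb C$ with $|\lambda|=1$ we have $\mathrm{Rec}(T)=\mathrm{Rec}(\lambda T)$; (ii) for every positive integer $p$ we have $\mathrm{Rec}(T)=\mathrm{Rec}(T^p)$. In particular, $T$ is recurrent if and only if $T^p$ is recurrent for every positive integer $p$, if and only if $\lambda T$ is recurrent for every $\lambda\in\mathbb T=\{z\in\mathbb C:|z|=1\}$.
   Context: A vector $x\in X$ is recurrent for $T$ if there is a strictly increasing sequence of positive integers $(k_n)$ with $T^{k_n}x\to x$; $\mathrm{Rec}(T)$ denotes the set of recurrent vectors of $T$. The operator $T$ is called recurrent if for every non-empty open set $U\subset X$ there is $k\in\mathbb N$ with $U\cap T^{-k}(U)\neq\emptyset$. *)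

theory Defs
  imports "HOL-Analysis.Analysis"
begin

text \<open>A complex
  Banach space is encoded as a real Banach space together with a complex
  structure J (multiplication by the imaginary unit): J is real-linear,
  J (J x) = -x, and the induced complex scalar multiplication
  (a + i b) x = a x + b J x is absolutely homogeneous for the norm.\<close>
definition cscale :: "('a::real_normed_vector \<Rightarrow> 'a) \<Rightarrow> complex \<Rightarrow> 'a \<Rightarrow> 'a" where
  "cscale J c x = Re c *\<^sub>R x + Im c *\<^sub>R J x"

definition complex_structure :: "('a::real_normed_vector \<Rightarrow> 'a) \<Rightarrow> bool" where
  "complex_structure J \<longleftrightarrow> linear J \<and> (\<forall>x. J (J x) = - x) \<and>
     (\<forall>c x. norm (cscale J c x) = cmod c * norm x)"

definition bounded_clinear_wrt :: "('a::real_normed_vector \<Rightarrow> 'a) \<Rightarrow> ('a \<Rightarrow> 'a) \<Rightarrow> bool" where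
  "bounded_clinear_wrt J T \<longleftrightarrow> bounded_linear T \<and> (\<forall>x. T (J x) = J (T x))"

definition Rec :: "('a::topological_space \<Rightarrow> 'a) \<Rightarrow> 'a set" where
  "Rec T = {x. \<exists>k::nat \<Rightarrow> nat. strict_mono k \<and> (\<forall>n. 0 < k n) \<and>
                  (\<lambda>n. (T ^^ k n) x) \<longlonglongrightarrow> x}"

definition recurrent :: "('a::topological_space \<Rightarrow> 'a) \<Rightarrow> bool" where
  "recurrent T \<longleftrightarrow> (\<forall>U. open U \<and> U \<noteq> {} \<longrightarrow>
                     (\<exists>k::nat. 0 < k \<and> U \<inter> (T ^^ k) -` U \<noteq> {}))"

end

theory Submission
  imports Defs
begin

(* A vector x is recurrent iff T^k x comes arbitrarily close to x for some k > 0.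
   The key is a simultaneous recurrence: for x in Rec T and |l| = 1 there are return
   times k with T^k x close to x and l^k close to 1 at the same time.  The set of
   cluster values of l^k along return times of x is nonempty by compactness of the
   circle and, by continuity of the iterates, closed under multiplication; so it
   contains all powers of one of its unimodular elements, and some power of that
   element is close to 1.  Part (i) follows as (l T)^k x = l^k T^k x.  For part (ii)
   take l a primitive p-th root of unity: its powers near 1 are equal to 1, so the
   return times can be chosen divisible by p.  The statements about recurrent
   operators follow since, by Baire's theorem, T is recurrent iff Rec T is dense. *)

lemma continuous_on_funpow:
  fixes f :: "'a::topological_space \<Rightarrow> 'a"
  assumes "continuous_on UNIV f"
  shows "continuous_on UNIV (f ^^ k)"
proof (induction k)
  case 0
  show ?case by simp
next
  case (Suc k)
  then show ?case using continuous_on_compose2[OF assms Suc] by simp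
qed

lemma funpow_fixpoint_mult:
  assumes "(f ^^ k) x = x"
  shows "(f ^^ (k * j)) x = x"
  using assms by (induction j) (simp_all add: funpow_add)

lemma close_return_beyond:
  fixes T :: "'a::metric_space \<Rightarrow> 'a"
  assumes returns: "\<forall>e>0. \<exists>k>0. dist ((T ^^ k) x) x < e" and "e > 0"
  shows "\<exists>m>N. dist ((T ^^ m) x) x < e"
proof (cases "\<exists>k>0. (T ^^ k) x = x")
  case True
  then obtain k where "k > 0" "(T ^^ k) x = x" by blast
  then have "k * Suc N > N" "(T ^^ (k * Suc N)) x = x"
    by (simp_all only: funpow_fixpoint_mult) (cases k, auto)
  with \<open>e > 0\<close> show ?thesis by (intro exI[of _ "k * Suc N"]) simp
next
  case False
  \<comment> \<open>all returns are at positive distance, so a return closer than the first N ones comes after them\<close>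
  define d where "d = Min (insert e ((\<lambda>k. dist ((T ^^ k) x) x) ` {1..N}))"
  have "(T ^^ k) x \<noteq> x" if "k > 0" for k using False that by blast
  then have "d > 0" using \<open>e > 0\<close> by (auto simp: d_def Suc_le_eq)
  then obtain k where k: "k > 0" "dist ((T ^^ k) x) x < d" using returns by blast
  have "k > N"
  proof (rule ccontr)
    assume "\<not> k > N"
    then have "d \<le> dist ((T ^^ k) x) x" unfolding d_def using k(1) by (intro Min_le) auto
    with k(2) show False by simp
  qed
  moreover have "d \<le> e" by (simp add: d_def)
  ultimately show ?thesis using k(2) by (intro exI[of _ k]) simp
qed

lemma Rec_iff_dist:
  fixes T :: "'a::metric_space \<Rightarrow> 'a"
  shows "x \<in> Rec T \<longleftrightarrow> (\<forall>e>0. \<exists>k>0. dist ((T ^^ k) x) x < e)"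
proof
  assume "x \<in> Rec T"
  then obtain k where k: "\<forall>n. 0 < k n" "(\<lambda>n. (T ^^ k n) x) \<longlonglongrightarrow> x"
    unfolding Rec_def by blast
  show "\<forall>e>0. \<exists>k>0. dist ((T ^^ k) x) x < e"
  proof (intro allI impI)
    fix e :: real assume "e > 0"
    then obtain n where "dist ((T ^^ k n) x) x < e"
      using k(2) unfolding lim_sequentially by blast
    with k(1) show "\<exists>k>0. dist ((T ^^ k) x) x < e" by blast
  qed
next
  assume returns: "\<forall>e>0. \<exists>k>0. dist ((T ^^ k) x) x < e"
  define P where "P n m \<longleftrightarrow> 0 < m \<and> dist ((T ^^ m) x) x < inverse (Suc n)" for n m
  have "\<exists>m. P 0 m"
    using close_return_beyond[OF returns, where e=1 and N=0] by (simp add: P_def)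
  moreover have "\<exists>m'. P (Suc n) m' \<and> m < m'" for m n
  proof -
    obtain m' where "m' > m" "dist ((T ^^ m') x) x < inverse (Suc (Suc n))"
      using close_return_beyond[OF returns, where e="inverse (Suc (Suc n))" and N=m] by auto
    then show ?thesis by (intro exI[of _ m']) (simp add: P_def)
  qed
  ultimately have "\<exists>k. \<forall>n. P n (k n) \<and> k n < k (Suc n)"
    by (intro dependent_nat_choice) blast+
  then obtain k where k: "\<And>n. 0 < k n" "\<And>n. dist ((T ^^ k n) x) x < inverse (Suc n)"
    and "\<And>n. k n < k (Suc n)"
    unfolding P_def by blast
  then have "strict_mono k" by (simp add: strict_mono_Suc_iff)
  have "(\<lambda>n. (T ^^ k n) x) \<longlonglongrightarrow> x"
  proof (rule metric_LIMSEQ_I)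
    fix r :: real assume "r > 0"
    then obtain N where N: "inverse (Suc N) < r" using reals_Archimedean by blast
    have "dist ((T ^^ k n) x) x < r" if "n \<ge> N" for n
    proof -
      have "inverse (Suc n) \<le> inverse (Suc N)" using that by (simp add: field_simps)
      with k(2)[of n] N show ?thesis by linarith
    qed
    then show "\<exists>N. \<forall>n\<ge>N. dist ((T ^^ k n) x) x < r" by blast
  qed
  with k(1) \<open>strict_mono k\<close> show "x \<in> Rec T" unfolding Rec_def by blast
qed

definition return_phases :: "('a::metric_space \<Rightarrow> 'a) \<Rightarrow> 'a \<Rightarrow> complex \<Rightarrow> complex set" where
  "return_phases T x l = {\<mu>. \<forall>e>0. \<exists>m>0. dist ((T ^^ m) x) x < e \<and> dist (l ^ m) \<mu> < e}"

lemma return_phases_nonempty: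
  fixes T :: "'a::metric_space \<Rightarrow> 'a"
  assumes "x \<in> Rec T" and "cmod l = 1"
  obtains \<mu> where "cmod \<mu> = 1" "\<mu> \<in> return_phases T x l"
proof -
  obtain k where k: "\<forall>n. 0 < k n" "(\<lambda>n. (T ^^ k n) x) \<longlonglongrightarrow> x"
    using assms(1) unfolding Rec_def by blast
  have "\<forall>n. l ^ k n \<in> sphere 0 1" using assms(2) by (simp add: norm_power)
  then obtain \<mu> r where \<mu>: "\<mu> \<in> sphere 0 1" "strict_mono r" "((\<lambda>n. l ^ k n) \<circ> r) \<longlonglongrightarrow> \<mu>"
    by (rule seq_compactE[OF compact_imp_seq_compact[OF compact_sphere]])
  have "\<mu> \<in> return_phases T x l"
    unfolding return_phases_def
  proof (intro CollectI allI impI)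
    fix e :: real assume "e > 0"
    have "\<forall>\<^sub>F n in sequentially. dist ((T ^^ k (r n)) x) x < e \<and> dist (l ^ k (r n)) \<mu> < e"
      using LIMSEQ_subseq_LIMSEQ[OF k(2) \<mu>(2)] \<mu>(3) \<open>e > 0\<close> unfolding o_def
      by (intro eventually_conj) (auto dest: tendstoD)
    then obtain n where "dist ((T ^^ k (r n)) x) x < e \<and> dist (l ^ k (r n)) \<mu> < e"
      unfolding eventually_sequentially by blast
    then show "\<exists>m>0. dist ((T ^^ m) x) x < e \<and> dist (l ^ m) \<mu> < e"
      using k(1) by blast
  qed
  with \<mu>(1) show ?thesis using that by simp
qed

lemma return_phases_mult:
  fixes T :: "'a::metric_space \<Rightarrow> 'a"
  assumes "continuous_on UNIV T" and "cmod l = 1"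
    and a: "a \<in> return_phases T x l" and b: "b \<in> return_phases T x l" "cmod b = 1"
  shows "a * b \<in> return_phases T x l"
  unfolding return_phases_def
proof (intro CollectI allI impI)
  fix e :: real assume "e > 0"
  then have "e/2 > 0" by simp
  then obtain m1 where m1: "m1 > 0" "dist ((T ^^ m1) x) x < e/2" "dist (l ^ m1) a < e/2"
    using a unfolding return_phases_def by blast
  \<comment> \<open>a second return close enough to x that T^m1 keeps it e/2-close to T^m1 x\<close>
  obtain d where d: "d > 0" "\<And>y. dist y x < d \<Longrightarrow> dist ((T ^^ m1) y) ((T ^^ m1) x) < e/2"
    using continuous_on_funpow[OF assms(1), of m1] \<open>e/2 > 0\<close>
    unfolding continuous_on_iff by blast
  obtain m2 where m2: "m2 > 0" "dist ((T ^^ m2) x) x < d" "dist (l ^ m2) b < e/2"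
  proof -
    have "min d (e/2) > 0" using \<open>d > 0\<close> \<open>e > 0\<close> by simp
    with b(1) obtain m2 where "m2 > 0" "dist ((T ^^ m2) x) x < min d (e/2)" "dist (l ^ m2) b < min d (e/2)"
      unfolding return_phases_def by blast
    with that show ?thesis by simp
  qed
  have "dist ((T ^^ (m1 + m2)) x) x \<le> dist ((T ^^ m1) ((T ^^ m2) x)) ((T ^^ m1) x) + dist ((T ^^ m1) x) x"
    by (simp add: funpow_add dist_triangle)
  also have "\<dots> < e" using d(2)[OF m2(2)] m1(2) by simp
  finally have "dist ((T ^^ (m1 + m2)) x) x < e" .
  moreover have "dist (l ^ (m1 + m2)) (a * b) < e"
  proof -
    have "l ^ (m1 + m2) - a * b = l ^ m1 * (l ^ m2 - b) + b * (l ^ m1 - a)"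
      by (simp add: power_add algebra_simps)
    then have "dist (l ^ (m1 + m2)) (a * b) \<le> cmod (l ^ m1 * (l ^ m2 - b)) + cmod (b * (l ^ m1 - a))"
      by (simp add: dist_norm norm_triangle_ineq)
    also have "\<dots> = dist (l ^ m2) b + dist (l ^ m1) a"
      using assms(2) b(2) by (simp add: norm_mult norm_power dist_norm)
    also have "\<dots> < e" using m1(3) m2(3) by simp
    finally show ?thesis .
  qed
  ultimately show "\<exists>m>0. dist ((T ^^ m) x) x < e \<and> dist (l ^ m) (a * b) < e"
    using m1(1) by (intro exI[of _ "m1 + m2"]) simp
qed

lemma return_phases_power:
  fixes T :: "'a::metric_space \<Rightarrow> 'a"
  assumes "continuous_on UNIV T" and "cmod l = 1"
    and "\<mu> \<in> return_phases T x l" "cmod \<mu> = 1"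
  shows "\<mu> ^ Suc n \<in> return_phases T x l"
proof (induction n)
  case (Suc n)
  have "\<mu> ^ Suc n * \<mu> \<in> return_phases T x l"
    using return_phases_mult[OF assms(1,2) Suc assms(3,4)] .
  then show ?case by (simp add: mult.commute)
qed (use assms in simp)

lemma unimodular_power_near_one:
  fixes \<mu> :: complex
  assumes "cmod \<mu> = 1" and "\<delta> > 0"
  obtains d where "d > 0" "dist (\<mu> ^ d) 1 < \<delta>"
proof -
  have "\<forall>n. \<mu> ^ n \<in> sphere 0 1" using assms(1) by (simp add: norm_power)
  then obtain L r where r: "L \<in> sphere 0 1" "strict_mono r" "((\<lambda>n. \<mu> ^ n) \<circ> r) \<longlonglongrightarrow> L"
    by (rule seq_compactE[OF compact_imp_seq_compact[OF compact_sphere]])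
  \<comment> \<open>two nearby powers along the convergent subsequence differ by a power close to 1\<close>
  then obtain M where "\<forall>m\<ge>M. \<forall>n\<ge>M. dist (\<mu> ^ r m) (\<mu> ^ r n) < \<delta>"
    using assms(2) LIMSEQ_imp_Cauchy[OF r(3)] unfolding Cauchy_def o_def by blast
  then have M: "dist (\<mu> ^ r (Suc M)) (\<mu> ^ r M) < \<delta>" by simp
  define d where "d = r (Suc M) - r M"
  have "r (Suc M) > r M" using r(2) by (simp add: strict_mono_def)
  then have "\<mu> ^ r (Suc M) = \<mu> ^ r M * \<mu> ^ d" by (simp add: d_def flip: power_add)
  then have "dist (\<mu> ^ r (Suc M)) (\<mu> ^ r M) = cmod (\<mu> ^ r M * (\<mu> ^ d - 1))"
    by (simp add: dist_norm algebra_simps)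
  also have "\<dots> = dist (\<mu> ^ d) 1"
    using assms(1) by (simp add: norm_mult norm_power dist_norm)
  finally have "dist (\<mu> ^ r (Suc M)) (\<mu> ^ r M) = dist (\<mu> ^ d) 1" .
  moreover have "d > 0" using \<open>r (Suc M) > r M\<close> by (simp add: d_def)
  ultimately show ?thesis using M that by simp
qed

lemma one_in_return_phases:
  fixes T :: "'a::metric_space \<Rightarrow> 'a"
  assumes "continuous_on UNIV T" and "x \<in> Rec T" and "cmod l = 1"
  shows "1 \<in> return_phases T x l"
  unfolding return_phases_def
proof (intro CollectI allI impI)
  fix e :: real assume "e > 0"
  then have "e/2 > 0" by simp
  obtain \<mu> where \<mu>: "cmod \<mu> = 1" "\<mu> \<in> return_phases T x l"
    using return_phases_nonempty[OF assms(2,3)] .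
  obtain d where d: "d > 0" "dist (\<mu> ^ d) 1 < e/2"
    using unimodular_power_near_one[OF \<mu>(1) \<open>e/2 > 0\<close>] .
  have "\<mu> ^ Suc (d - 1) \<in> return_phases T x l"
    using return_phases_power[OF assms(1,3) \<mu>(2,1)] .
  then have "\<mu> ^ d \<in> return_phases T x l" using d(1) by simp
  then obtain m where m: "m > 0" "dist ((T ^^ m) x) x < e/2" "dist (l ^ m) (\<mu> ^ d) < e/2"
    using \<open>e/2 > 0\<close> unfolding return_phases_def by blast
  have "dist (l ^ m) 1 \<le> dist (l ^ m) (\<mu> ^ d) + dist (\<mu> ^ d) 1" by (rule dist_triangle)
  with m(3) d(2) have "dist (l ^ m) 1 < e" by linarith
  moreover have "dist ((T ^^ m) x) x < e" using m(2) \<open>e > 0\<close> by linarith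
  ultimately show "\<exists>m>0. dist ((T ^^ m) x) x < e \<and> dist (l ^ m) 1 < e"
    using m(1) by blast
qed

lemma continuous_on_bounded_clinear_wrt:
  "bounded_clinear_wrt J T \<Longrightarrow> continuous_on UNIV T"
  unfolding bounded_clinear_wrt_def by (simp add: linear_continuous_on)

lemma complex_structureD:
  assumes "complex_structure J"
  shows "linear J" "J (J x) = - x" "norm (cscale J c x) = cmod c * norm x"
  using assms unfolding complex_structure_def by auto

lemma cscale_one [simp]: "cscale J 1 x = x"
  by (simp add: cscale_def)

lemma cscale_diff_left: "cscale J a x - cscale J b x = cscale J (a - b) x"
  by (simp add: cscale_def scaleR_diff_left)

lemma cscale_diff_right: "linear J \<Longrightarrow> cscale J c x - cscale J c y = cscale J c (x - y)"
  by (simp add: cscale_def linear_diff scaleR_diff_right)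

lemma cscale_mult:
  assumes "complex_structure J"
  shows "cscale J a (cscale J b x) = cscale J (a * b) x"
proof -
  note J = complex_structureD[OF assms]
  have "J (cscale J b x) = Re b *\<^sub>R J x - Im b *\<^sub>R x"
    unfolding cscale_def using J(1,2) by (simp add: linear_add linear_scale)
  then have "cscale J a (cscale J b x) = Re a *\<^sub>R cscale J b x + Im a *\<^sub>R (Re b *\<^sub>R J x - Im b *\<^sub>R x)"
    by (simp only: cscale_def[of J a])
  also have "\<dots> = cscale J (a * b) x"
    by (simp add: cscale_def algebra_simps)
  finally show ?thesis .
qed

lemma bounded_linear_cscale:
  assumes "complex_structure J"
  shows "bounded_linear (cscale J c)"
proof (rule bounded_linear_intro[where K = "cmod c"])
  note J = complex_structureD[OF assms]
  show "cscale J c (x + y) = cscale J c x + cscale J c y" for x y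
    unfolding cscale_def using J(1) by (simp add: linear_add algebra_simps)
  show "cscale J c (r *\<^sub>R x) = r *\<^sub>R cscale J c x" for r x
    unfolding cscale_def using J(1) by (simp add: linear_scale algebra_simps)
  show "norm (cscale J c x) \<le> norm x * cmod c" for x
    using J(3) by (simp add: mult.commute)
qed

lemma bounded_clinear_wrt_cscale:
  assumes "bounded_clinear_wrt J T"
  shows "T (cscale J c x) = cscale J c (T x)"
proof -
  have "linear T" "\<And>x. T (J x) = J (T x)"
    using assms unfolding bounded_clinear_wrt_def by (auto intro: bounded_linear.linear)
  then show ?thesis unfolding cscale_def by (simp add: linear_add linear_scale)
qed

lemma bounded_clinear_wrt_cscale_comp:
  assumes J: "complex_structure J" and T: "bounded_clinear_wrt J T"
  shows "bounded_clinear_wrt J (\<lambda>x. cscale J l (T x))"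
  unfolding bounded_clinear_wrt_def
proof
  show "bounded_linear (\<lambda>x. cscale J l (T x))"
    using T bounded_linear_cscale[OF J] unfolding bounded_clinear_wrt_def
    by (blast intro: bounded_linear_compose)
  show "\<forall>x. cscale J l (T (J x)) = J (cscale J l (T x))"
    using T complex_structureD(1)[OF J] unfolding bounded_clinear_wrt_def
    by (simp add: cscale_def linear_add linear_scale)
qed

lemma funpow_cscale_comp:
  assumes "complex_structure J" and "bounded_clinear_wrt J T"
  shows "((\<lambda>x. cscale J l (T x)) ^^ m) x = cscale J (l ^ m) ((T ^^ m) x)"
  by (induction m)
     (simp_all add: bounded_clinear_wrt_cscale[OF assms(2)] cscale_mult[OF assms(1)])

lemma dist_cscale_le:
  assumes "complex_structure J" and "cmod c = 1"
  shows "dist (cscale J c y) x \<le> dist y x + cmod (c - 1) * norm x"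
proof -
  note J = complex_structureD[OF assms(1)]
  have "cscale J c y - x = (cscale J c y - cscale J c x) + (cscale J c x - cscale J 1 x)"
    by simp
  also have "\<dots> = cscale J c (y - x) + cscale J (c - 1) x"
    by (simp only: cscale_diff_right[OF J(1)] cscale_diff_left)
  finally have "cscale J c y - x = cscale J c (y - x) + cscale J (c - 1) x" .
  then have "dist (cscale J c y) x \<le> norm (cscale J c (y - x)) + norm (cscale J (c - 1) x)"
    by (simp add: dist_norm norm_triangle_ineq)
  also have "\<dots> = dist y x + cmod (c - 1) * norm x"
    using assms(2) by (simp add: J(3) dist_norm)
  finally show ?thesis .
qed

lemma Rec_subset_Rec_cscale_comp:
  assumes J: "complex_structure J" and T: "bounded_clinear_wrt J T" and "cmod l = 1"
  shows "Rec T \<subseteq> Rec (\<lambda>x. cscale J l (T x))"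
proof
  fix x assume "x \<in> Rec T"
  have returns: "1 \<in> return_phases T x l"
    using one_in_return_phases continuous_on_bounded_clinear_wrt[OF T] \<open>x \<in> Rec T\<close> \<open>cmod l = 1\<close>
    by blast
  show "x \<in> Rec (\<lambda>x. cscale J l (T x))"
    unfolding Rec_iff_dist
  proof (intro allI impI)
    fix e :: real assume "e > 0"
    define e' where "e' = e / (1 + norm x)"
    have "e' > 0" using \<open>e > 0\<close> by (simp add: e'_def add_pos_nonneg)
    then obtain m where m: "m > 0" "dist ((T ^^ m) x) x < e'" "dist (l ^ m) 1 < e'"
      using returns unfolding return_phases_def by blast
    have "dist (((\<lambda>x. cscale J l (T x)) ^^ m) x) x \<le> dist ((T ^^ m) x) x + cmod (l ^ m - 1) * norm x"
      unfolding funpow_cscale_comp[OF J T]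
      using dist_cscale_le[OF J] \<open>cmod l = 1\<close> by (simp add: norm_power)
    also have "\<dots> < e' + e' * norm x"
      using m(2,3) by (intro add_less_le_mono mult_right_mono) (auto simp: dist_norm)
    also have "\<dots> = e' * (1 + norm x)"
      by (simp add: algebra_simps)
    also have "\<dots> = e"
      using norm_ge_zero[of x] by (simp add: e'_def add_nonneg_eq_0_iff)
    finally show "\<exists>k>0. dist (((\<lambda>x. cscale J l (T x)) ^^ k) x) x < e"
      using m(1) by blast
  qed
qed

lemma Rec_cscale_comp_eq:
  assumes J: "complex_structure J" and T: "bounded_clinear_wrt J T" and l: "cmod l = 1"
  shows "Rec T = Rec (\<lambda>x. cscale J l (T x))"
proof
  show "Rec T \<subseteq> Rec (\<lambda>x. cscale J l (T x))"
    using Rec_subset_Rec_cscale_comp[OF assms] .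
  have "cnj l * l = 1"
    using complex_norm_square[of l] l by (simp add: mult.commute)
  then have "(\<lambda>x. cscale J (cnj l) (cscale J l (T x))) = T"
    by (simp add: cscale_mult[OF J])
  moreover have "Rec (\<lambda>x. cscale J l (T x)) \<subseteq> Rec (\<lambda>x. cscale J (cnj l) (cscale J l (T x)))"
    using Rec_subset_Rec_cscale_comp[OF J bounded_clinear_wrt_cscale_comp[OF J T, of l], of "cnj l"] l
    by simp
  ultimately show "Rec (\<lambda>x. cscale J l (T x)) \<subseteq> Rec T" by simp
qed

lemma Rec_funpow_subset:
  fixes T :: "'a::metric_space \<Rightarrow> 'a"
  assumes "p > 0"
  shows "Rec (T ^^ p) \<subseteq> Rec T"
proof
  fix x assume "x \<in> Rec (T ^^ p)"
  show "x \<in> Rec T"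
    unfolding Rec_iff_dist
  proof (intro allI impI)
    fix e :: real assume "e > 0"
    then obtain k where "k > 0" "dist (((T ^^ p) ^^ k) x) x < e"
      using \<open>x \<in> Rec (T ^^ p)\<close> unfolding Rec_iff_dist by blast
    with \<open>p > 0\<close> show "\<exists>m>0. dist ((T ^^ m) x) x < e"
      by (intro exI[of _ "p * k"]) (simp add: funpow_mult)
  qed
qed

lemma roots_of_unity_isolated:
  assumes "p > 0"
  obtains \<delta> where "\<delta> > 0" "\<And>z::complex. z ^ p = 1 \<Longrightarrow> dist z 1 < \<delta> \<Longrightarrow> z = 1"
proof
  define D where "D = insert 1 ((\<lambda>z. dist z 1) ` {z::complex. z ^ p = 1 \<and> z \<noteq> 1})"
  have "finite {z::complex. z ^ p = 1}" using assms by (intro finite_roots_unity) simp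
  then have "finite {z::complex. z ^ p = 1 \<and> z \<noteq> 1}" by (rule finite_subset[rotated]) auto
  then have "finite D" by (simp add: D_def)
  then show "Min D > 0" by (auto simp: D_def)
  show "z = 1" if "z ^ p = 1" "dist z 1 < Min D" for z :: complex
  proof (rule ccontr)
    assume "z \<noteq> 1"
    then have "Min D \<le> dist z 1" using \<open>finite D\<close> that(1) by (intro Min_le) (auto simp: D_def)
    with that(2) show False by simp
  qed
qed

lemma Rec_subset_Rec_funpow:
  fixes T :: "'a::metric_space \<Rightarrow> 'a"
  assumes "continuous_on UNIV T" and "p > 0"
  shows "Rec T \<subseteq> Rec (T ^^ p)"
proof
  fix x assume "x \<in> Rec T"
  define \<omega> where "\<omega> = exp (2 * of_real pi * \<i> / of_nat p)"
  have \<omega>_power: "\<omega> ^ m = exp (2 * of_real pi * \<i> * of_nat m / of_nat p)" for m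
    by (simp add: \<omega>_def mult.commute flip: exp_of_nat_mult)
  have "cmod \<omega> = 1" by (simp add: \<omega>_def norm_exp_eq_Re)
  then have returns: "1 \<in> return_phases T x \<omega>"
    using one_in_return_phases assms(1) \<open>x \<in> Rec T\<close> by blast
  obtain \<delta> where \<delta>: "\<delta> > 0" "\<And>z::complex. z ^ p = 1 \<Longrightarrow> dist z 1 < \<delta> \<Longrightarrow> z = 1"
    using roots_of_unity_isolated[OF assms(2)] by blast
  show "x \<in> Rec (T ^^ p)"
    unfolding Rec_iff_dist
  proof (intro allI impI)
    fix e :: real assume "e > 0"
    then have "min e \<delta> > 0" using \<delta>(1) by simp
    then obtain m where m: "m > 0" "dist ((T ^^ m) x) x < min e \<delta>" "dist (\<omega> ^ m) 1 < min e \<delta>"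
      using returns unfolding return_phases_def by blast
    \<comment> \<open>a power of a primitive p-th root of unity close to 1 equals 1, so p divides the return time\<close>
    have "\<omega> ^ p = 1"
      using complex_root_unity_eq_1[of p p] assms(2) by (simp add: \<omega>_power)
    then have "(\<omega> ^ m) ^ p = 1"
      by (metis mult.commute power_mult power_one)
    then have "\<omega> ^ m = 1" using \<delta>(2) m(3) by simp
    then obtain j where "m = p * j"
      using complex_root_unity_eq_1[of p m] assms(2) by (auto simp: \<omega>_power)
    with m show "\<exists>k>0. dist (((T ^^ p) ^^ k) x) x < e"
      by (intro exI[of _ j]) (simp add: funpow_mult)
  qed
qed

lemma Rec_funpow_eq:
  fixes T :: "'a::metric_space \<Rightarrow> 'a"
  assumes "continuous_on UNIV T" and "p > 0"
  shows "Rec T = Rec (T ^^ p)"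
  using Rec_subset_Rec_funpow[OF assms] Rec_funpow_subset[OF assms(2)] by blast

lemma dense_Rec_imp_recurrent:
  fixes T :: "'a::metric_space \<Rightarrow> 'a"
  assumes "closure (Rec T) = UNIV"
  shows "recurrent T"
  unfolding recurrent_def
proof (intro allI impI)
  fix U :: "'a set" assume U: "open U \<and> U \<noteq> {}"
  then obtain x where "x \<in> U" "x \<in> Rec T"
    using assms open_Int_closure_eq_empty[of U "Rec T"] by auto
  obtain e where "e > 0" "ball x e \<subseteq> U" using U \<open>x \<in> U\<close> by (meson openE)
  then obtain k where "k > 0" "dist ((T ^^ k) x) x < e"
    using \<open>x \<in> Rec T\<close> unfolding Rec_iff_dist by blast
  with \<open>ball x e \<subseteq> U\<close> have "(T ^^ k) x \<in> U" by (auto simp: dist_commute)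
  with \<open>x \<in> U\<close> \<open>k > 0\<close> show "\<exists>k>0. U \<inter> (T ^^ k) -` U \<noteq> {}" by blast
qed

definition returns_within :: "('a::metric_space \<Rightarrow> 'a) \<Rightarrow> real \<Rightarrow> 'a set" where
  "returns_within T r = {x. \<exists>k>0. dist ((T ^^ k) x) x < r}"

lemma Rec_eq_Inter_returns_within:
  fixes T :: "'a::metric_space \<Rightarrow> 'a"
  shows "Rec T = (\<Inter>n. returns_within T (inverse (Suc n)))"
proof (intro equalityI subsetI)
  show "x \<in> (\<Inter>n. returns_within T (inverse (Suc n)))" if "x \<in> Rec T" for x
  proof
    fix n
    have "inverse (Suc n) > (0::real)" by simp
    then show "x \<in> returns_within T (inverse (Suc n))"
      using that unfolding Rec_iff_dist returns_within_def by blast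
  qed
  show "x \<in> Rec T" if "x \<in> (\<Inter>n. returns_within T (inverse (Suc n)))" for x
    unfolding Rec_iff_dist
  proof (intro allI impI)
    fix e :: real assume "e > 0"
    then obtain n where n: "inverse (Suc n) < e" using reals_Archimedean by blast
    from that have "x \<in> returns_within T (inverse (Suc n))" by blast
    then obtain k where k: "k > 0" "dist ((T ^^ k) x) x < inverse (Suc n)"
      unfolding returns_within_def by blast
    from k(2) n have "dist ((T ^^ k) x) x < e" by linarith
    with k(1) show "\<exists>k>0. dist ((T ^^ k) x) x < e" by blast
  qed
qed

lemma open_returns_within:
  fixes T :: "'a::metric_space \<Rightarrow> 'a"
  assumes "continuous_on UNIV T"
  shows "open (returns_within T r)"
proof -
  have "open {x. dist ((T ^^ k) x) x < r}" for k
    by (intro open_Collect_less continuous_on_dist continuous_on_funpow[OF assms]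
        continuous_on_id continuous_on_const)
  moreover have "returns_within T r = (\<Union>k\<in>{0<..}. {x. dist ((T ^^ k) x) x < r})"
    by (auto simp: returns_within_def)
  ultimately show ?thesis by auto
qed

lemma recurrent_imp_dense_returns_within:
  fixes T :: "'a::metric_space \<Rightarrow> 'a"
  assumes "recurrent T" and "r > 0"
  shows "closure (returns_within T r) = UNIV"
proof -
  have "\<exists>z\<in>returns_within T r. dist z y < e" if "e > 0" for y and e :: real
  proof -
    define s where "s = min e r / 2"
    have "s > 0" using \<open>e > 0\<close> \<open>r > 0\<close> by (simp add: s_def)
    then have "open (ball y s)" "ball y s \<noteq> {}" by auto
    then obtain k where "k > 0" "ball y s \<inter> (T ^^ k) -` ball y s \<noteq> {}"
      using assms(1) unfolding recurrent_def by blast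
    then obtain z where z: "z \<in> ball y s" "(T ^^ k) z \<in> ball y s" by blast
    have "dist ((T ^^ k) z) z \<le> dist ((T ^^ k) z) y + dist y z" by (rule dist_triangle)
    also have "\<dots> < s + s" using z by (intro add_strict_mono) (auto simp: dist_commute)
    also have "\<dots> \<le> r" by (simp add: s_def)
    finally have "z \<in> returns_within T r" using \<open>k > 0\<close> unfolding returns_within_def by blast
    moreover have "dist z y < e"
      using z(1) \<open>e > 0\<close> by (simp add: s_def dist_commute)
    ultimately show ?thesis by blast
  qed
  then show ?thesis by (auto simp: closure_approachable)
qed

lemma recurrent_imp_dense_Rec:
  fixes T :: "'a::complete_space \<Rightarrow> 'a"
  assumes "continuous_on UNIV T" and "recurrent T"
  shows "closure (Rec T) = UNIV"
proof -
  have "euclidean closure_of (\<Inter>n. returns_within T (inverse (Suc n))) = topspace euclidean"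
    using open_returns_within[OF assms(1)] recurrent_imp_dense_returns_within[OF assms(2)]
    by (intro Baire_category) (auto simp: completely_metrizable_space_euclidean)
  then show ?thesis by (simp add: Rec_eq_Inter_returns_within[of T])
qed

lemma recurrent_iff_dense_Rec:
  fixes T :: "'a::complete_space \<Rightarrow> 'a"
  assumes "continuous_on UNIV T"
  shows "recurrent T \<longleftrightarrow> closure (Rec T) = UNIV"
  using recurrent_imp_dense_Rec[OF assms] dense_Rec_imp_recurrent by blast

theorem proposition2p3:
  fixes T J :: "'a::banach \<Rightarrow> 'a"
  assumes "complex_structure J"
    and "bounded_clinear_wrt J T"
  shows "(\<forall>l::complex. cmod l = 1 \<longrightarrow> Rec T = Rec (\<lambda>x. cscale J l (T x)))
       \<and> (\<forall>p::nat. 0 < p \<longrightarrow> Rec T = Rec (T ^^ p))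
       \<and> (recurrent T \<longleftrightarrow> (\<forall>p::nat. 0 < p \<longrightarrow> recurrent (T ^^ p)))
       \<and> (recurrent T \<longleftrightarrow> (\<forall>l::complex. cmod l = 1 \<longrightarrow> recurrent (\<lambda>x. cscale J l (T x))))"
proof -
  note continuous = continuous_on_bounded_clinear_wrt
  note recurrent_T = recurrent_iff_dense_Rec[OF continuous[OF assms(2)]]
  have rotation: "Rec T = Rec (\<lambda>x. cscale J l (T x))" if "cmod l = 1" for l
    using Rec_cscale_comp_eq[OF assms that] .
  have power: "Rec T = Rec (T ^^ p)" if "0 < p" for p
    using Rec_funpow_eq[OF continuous[OF assms(2)] that] .
  have recurrent_power: "recurrent (T ^^ p) \<longleftrightarrow> recurrent T" if "0 < p" for p
    using recurrent_iff_dense_Rec[OF continuous_on_funpow[OF continuous[OF assms(2)]]]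
      recurrent_T power[OF that] by simp
  have recurrent_rotation: "recurrent (\<lambda>x. cscale J l (T x)) \<longleftrightarrow> recurrent T" if "cmod l = 1" for l
    using recurrent_iff_dense_Rec[OF continuous[OF bounded_clinear_wrt_cscale_comp[OF assms]]]
      recurrent_T rotation[OF that] by simp
  have "recurrent T \<longleftrightarrow> (\<forall>p::nat. 0 < p \<longrightarrow> recurrent (T ^^ p))"
    using recurrent_power recurrent_power[of 1] by auto
  moreover have "recurrent T \<longleftrightarrow> (\<forall>l::complex. cmod l = 1 \<longrightarrow> recurrent (\<lambda>x. cscale J l (T x)))"
    using recurrent_rotation norm_one by metis
  ultimately show ?thesis
    using rotation power by blast
qed

end
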